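(* Let $0\le\beta\le 1$ and let $f\in\mathcal{A}_{\beta}$ with $f(z)=z+\sum_{n=2}^\infty a_nz^n$. Let $\gamma_1=\tfrac12 a_2$, $\gamma_2=\tfrac12\left(a_3-\tfrac12 a_2^2\right)$, $\gamma_3=\tfrac12\left(a_4-a_2a_3+\tfrac13 a_2^3\right)$. Then \[ |\gamma_m|\le \frac{1}{(m+1)-m\beta},\qquad m=1,2,3. \] Moreover, all three bounds are sharp: for each $m\in\{1,2,3\}$ there exists $f\in\mathcal{A}_\beta$ for which equality holds.
   Context: $\mathbb{D}=\{z\in\mathbb{C}:|z|<1\}$. $\mathcal{A}$ denotes the class of holomorphic functions $f$ on $\mathbb{D}$ with $f(0)=0$, $f'(0)=1$, written $f(z)=z+\sum_{n\ge2}a_nz^n$. For $\beta\in[0,1]$, $\mathcal{A}_{\beta}=\{f\in\mathcal{A}: \operatorname{Re}\big(\beta\, f(z)/z+(1-\beta)f'(z)\big)>0 \text{ for all } z\in\mathbb{D}\}$ (with $f(z)/z$ extended by $1$ at $z=0$). The numbers $\gamma_n$ are the logarithmic coefficients, defined by $\log(f(z)/z)=2\sum_{n\ge1}\gamma_n z^n$ near $0$; the formulas for $\gamma_1,\gamma_2,\gamma_3$ above are the resulting expressions. *)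

theory Defs
  imports "HOL-Complex_Analysis.Complex_Analysis"
begin

definition taylor_coeff :: "(complex \<Rightarrow> complex) \<Rightarrow> nat \<Rightarrow> complex" where
  "taylor_coeff f n = (deriv ^^ n) f 0 / of_nat (fact n)"

definition class_A :: "(complex \<Rightarrow> complex) \<Rightarrow> bool" where
  "class_A f \<longleftrightarrow> f holomorphic_on ball 0 1 \<and> f 0 = 0 \<and> deriv f 0 = 1"

definition class_A_beta :: "real \<Rightarrow> (complex \<Rightarrow> complex) \<Rightarrow> bool" where
  "class_A_beta \<beta> f \<longleftrightarrow> class_A f \<and>
     (\<forall>z\<in>ball 0 1. Re (of_real \<beta> * (if z = 0 then 1 else f z / z)
                        + of_real (1 - \<beta>) * deriv f z) > 0)"

definition log_coeff :: "(complex \<Rightarrow> complex) \<Rightarrow> nat \<Rightarrow> complex" where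
  "log_coeff f m =
     (let a2 = taylor_coeff f 2; a3 = taylor_coeff f 3; a4 = taylor_coeff f 4 in
      if m = 1 then a2 / 2
      else if m = 2 then (a3 - a2^2 / 2) / 2
      else if m = 3 then (a4 - a2 * a3 + a2^3 / 3) / 2
      else undefined)"

end

theory Submission
  imports Defs
begin

text \<open>
  For \<open>f \<in> \<A>\<^sub>\<beta>\<close>, the function \<open>p(z) = \<beta> f(z)/z + (1 - \<beta>) f'(z)\<close>
  has positive real part, \<open>p(0) = 1\<close> and Taylor coefficients
  \<open>p\<^sub>n = (1 + n(1 - \<beta>)) a\<^sub>n\<^sub>+\<^sub>1\<close>. Its Cayley transform \<open>(p - 1)/(p + 1)\<close>
  is \<open>z g(z)\<close> for a Schur function \<open>g\<close>, and two steps of the Schur algorithm write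
  the first three coefficients of \<open>g\<close> in terms of three points \<open>a, s, u\<close> of the
  closed unit disc. Substituting, \<open>(1 + m(1 - \<beta>)) \<gamma>\<^sub>m\<close> becomes an explicit
  expression in \<open>a, s, u\<close> of modulus at most 1: trivially for \<open>m = 1\<close>, by the
  triangle inequality for \<open>m = 2\<close>, and for \<open>m = 3\<close> after completing a square
  in \<open>(1 - |a|) |s|\<close>. Equality is attained by the solution of
  \<open>\<beta> f(z)/z + (1 - \<beta>) f'(z) = (1 + z\<^sup>m)/(1 - z\<^sup>m)\<close>, whose coefficients
  \<open>a\<^sub>2, \<dots>, a\<^sub>m\<close> vanish while \<open>a\<^sub>m\<^sub>+\<^sub>1 = 2/(1 + m(1 - \<beta>))\<close>.
\<close>

section \<open>Power series on the unit disc\<close>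

lemma has_fps_expansion_fps_expansion_disc:
  "f holomorphic_on ball 0 1 \<Longrightarrow> f has_fps_expansion fps_expansion f 0"
  by (rule has_fps_expansion_fps_expansion) auto

lemma fps_expansion_unique_disc:
  fixes f g :: "complex \<Rightarrow> complex"
  assumes "f has_fps_expansion F" "g has_fps_expansion G" "\<forall>z\<in>ball 0 1. f z = g z"
  shows "F = G"
proof -
  have "eventually (\<lambda>z. f z = g z) (nhds 0)"
    unfolding eventually_nhds using assms(3) by (intro exI[of _ "ball 0 1"]) auto
  then have "g has_fps_expansion F"
    using assms(1) has_fps_expansion_cong by blast
  then show ?thesis
    using assms(2) by (rule fps_expansion_unique_complex)
qed

lemma taylor_coeff_eq_fps_nth: "taylor_coeff f n = fps_nth (fps_expansion f 0) n"
  by (simp add: taylor_coeff_def fps_expansion_def)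

lemma taylor_coeff_eval_fps:
  assumes "fps_conv_radius F > 0"
  shows "taylor_coeff (eval_fps F) n = fps_nth F n"
  unfolding taylor_coeff_def of_nat_fact using assms by (rule fps_nth_conv_deriv[symmetric])

lemma fps_conv_radius_le_if_norm_le:
  fixes A B :: "complex fps"
  assumes "\<And>n. norm (fps_nth B n) \<le> norm (fps_nth A n)"
  shows "fps_conv_radius A \<le> fps_conv_radius B"
  unfolding fps_conv_radius_def
proof (rule conv_radius_geI_ex')
  fix r :: real
  assume "0 < r" "ereal r < conv_radius (fps_nth A)"
  then have "summable (\<lambda>n. norm (fps_nth A n * of_real r ^ n))"
    by (intro abs_summable_in_conv_radius) simp
  moreover have "norm (fps_nth B n * of_real r ^ n) \<le> norm (fps_nth A n * of_real r ^ n)" for n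
    using assms[of n] by (simp add: norm_mult norm_power mult_right_mono)
  ultimately show "summable (\<lambda>n. fps_nth B n * of_real r ^ n)"
    by (rule summable_comparison_test')
qed

lemma eval_fps_linear_combination:
  fixes A B :: "complex fps"
  assumes "norm z < fps_conv_radius A" "norm z < fps_conv_radius B"
  shows "eval_fps (fps_const c * A + fps_const d * B) z = c * eval_fps A z + d * eval_fps B z"
proof -
  have "norm z < fps_conv_radius (fps_const c * A)" "norm z < fps_conv_radius (fps_const d * B)"
    using assms fps_conv_radius_mult[of "fps_const c" A] fps_conv_radius_mult[of "fps_const d" B]
    by (simp_all add: less_le_trans)
  then show ?thesis
    using assms by (simp add: eval_fps_add eval_fps_mult)
qed

section \<open>Schur functions\<close>

definition schur_function :: "(complex \<Rightarrow> complex) \<Rightarrow> bool" where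
  "schur_function h \<longleftrightarrow> h holomorphic_on ball 0 1 \<and> (\<forall>z\<in>ball 0 1. norm (h z) \<le> 1)"

lemma schwarz_quotient:
  assumes hol: "k holomorphic_on ball 0 1" and k0: "k 0 = 0"
    and lt1: "\<And>z. norm z < 1 \<Longrightarrow> norm (k z) < 1"
  obtains h where "schur_function h" "fps_expansion k 0 = fps_X * fps_expansion h 0"
proof
  define h where "h = (\<lambda>z. if z = 0 then deriv k 0 else (k z - k 0) / (z - 0))"
  have h_hol: "h holomorphic_on ball 0 1"
    unfolding h_def by (rule pole_lemma[OF hol]) simp
  show "schur_function h"
    unfolding schur_function_def
  proof (intro conjI ballI h_hol)
    fix z :: complex
    assume "z \<in> ball 0 1"
    then show "norm (h z) \<le> 1"
      using Schwarz_Lemma(1,2)[OF hol k0 lt1, of z]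
      by (auto simp: h_def k0 norm_divide divide_le_eq_1)
  qed
  have "\<forall>z\<in>ball 0 1. k z = z * h z"
    by (simp add: h_def k0)
  then show "fps_expansion k 0 = fps_X * fps_expansion h 0"
    by (intro fps_expansion_unique_disc[of k _ "\<lambda>z. z * h z"] has_fps_expansion_mult
        has_fps_expansion_fps_X has_fps_expansion_fps_expansion_disc hol h_hol)
qed

lemma schur_function_constant_or_norm_less:
  assumes "schur_function h"
  obtains "\<forall>z\<in>ball 0 1. h z = h 0" | "\<forall>z\<in>ball 0 1. norm (h z) < 1"
proof (cases "\<exists>w\<in>ball 0 1. norm (h w) \<ge> 1")
  case True
  then obtain w where w: "w \<in> ball 0 1" "norm (h w) \<ge> 1"
    by blast
  have le: "norm (h z) \<le> norm (h w)" if "z \<in> ball 0 1" for z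
    using assms w(2) that unfolding schur_function_def by (meson order_trans)
  have "h holomorphic_on ball 0 1"
    using assms by (simp add: schur_function_def)
  then have "h constant_on ball 0 1"
    by (rule maximum_modulus_principle[of h "ball 0 1" "ball 0 1" w]) (use w(1) le in auto)
  then have "\<forall>z\<in>ball 0 1. h z = h 0"
    unfolding constant_on_def by (metis centre_in_ball zero_less_one)
  then show ?thesis
    by (rule that(1))
next
  case False
  then have "\<forall>z\<in>ball 0 1. norm (h z) < 1"
    by (simp add: not_le)
  then show ?thesis
    by (rule that(2))
qed

lemma fps_moebius_coeffs:
  fixes H H1 :: "'a::comm_ring_1 fps"
  assumes "fps_X * H1 * (1 - fps_const b * H) = H - fps_const a" "fps_nth H 0 = a"
  shows "fps_nth H 1 = (1 - a * b) * fps_nth H1 0"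
    "fps_nth H 2 = (1 - a * b) * (fps_nth H1 1 - b * (fps_nth H1 0)\<^sup>2)"
proof -
  have coeff: "fps_nth (fps_X * H1 * (1 - fps_const b * H)) n = fps_nth (H - fps_const a) n" for n
    using assms(1) by simp
  show H1: "fps_nth H 1 = (1 - a * b) * fps_nth H1 0"
    using coeff[of 1] assms(2) by (simp add: fps_mult_nth_1 algebra_simps)
  have "fps_nth H 2 = (1 - a * b) * fps_nth H1 1 - b * fps_nth H1 0 * fps_nth H 1"
    using coeff[of 2] assms(2) by (simp add: fps_mult_nth eval_nat_numeral algebra_simps)
  also have "\<dots> = (1 - a * b) * (fps_nth H1 1 - b * (fps_nth H1 0)\<^sup>2)"
    unfolding H1 by (simp add: algebra_simps power2_eq_square)
  finally show "fps_nth H 2 = (1 - a * b) * (fps_nth H1 1 - b * (fps_nth H1 0)\<^sup>2)" .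
qed

lemma schur_moebius_quotient:
  assumes h_hol: "h holomorphic_on ball 0 1" and lt1: "\<forall>z\<in>ball 0 1. norm (h z) < 1"
  defines "a \<equiv> h 0" and "H \<equiv> fps_expansion h 0"
  obtains h1 where "schur_function h1"
    "fps_X * fps_expansion h1 0 * (1 - fps_const (cnj a) * H) = H - fps_const a"
proof -
  have a_lt1: "norm a < 1"
    using lt1 by (simp add: a_def)
  have den_nz: "1 - cnj a * h z \<noteq> 0" if "z \<in> ball 0 1" for z
    using norm_mult_less[of "cnj a" 1 "h z" 1] a_lt1 lt1 that by auto
  define k where "k = Moebius_function 0 a \<circ> h"
  have k_eq: "k z = (h z - a) / (1 - cnj a * h z)" for z
    by (simp add: k_def Moebius_function_simple)
  have k_hol: "k holomorphic_on ball 0 1"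
    unfolding k_eq[abs_def] using den_nz by (intro holomorphic_intros h_hol) auto
  obtain h1 where h1: "schur_function h1" and K: "fps_expansion k 0 = fps_X * fps_expansion h1 0"
  proof (rule schwarz_quotient[OF k_hol])
    show "k 0 = 0"
      by (simp add: k_eq a_def)
    show "norm (k z) < 1" if "norm z < 1" for z
      using Moebius_function_norm_lt_1[OF a_lt1, of "h z" 0] lt1 that by (simp add: k_def)
  qed
  have "fps_X * fps_expansion h1 0 * (1 - fps_const (cnj a) * H) = H - fps_const a"
  proof (rule fps_expansion_unique_disc)
    show "(\<lambda>z. k z * (1 - cnj a * h z))
        has_fps_expansion fps_X * fps_expansion h1 0 * (1 - fps_const (cnj a) * H)"
      unfolding H_def K[symmetric]
      by (intro has_fps_expansion_mult has_fps_expansion_diff has_fps_expansion_cmult_left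
          has_fps_expansion_1 has_fps_expansion_fps_expansion_disc k_hol h_hol)
    show "(\<lambda>z. h z - a) has_fps_expansion H - fps_const a"
      unfolding H_def by (intro has_fps_expansion_diff has_fps_expansion_const
          has_fps_expansion_fps_expansion_disc h_hol)
    show "\<forall>z\<in>ball 0 1. k z * (1 - cnj a * h z) = h z - a"
      using den_nz by (simp add: k_eq)
  qed
  then show ?thesis
    using h1 that by blast
qed

text \<open>One step of the Schur algorithm: \<open>h1 z = (h z - a) / (z * (1 - cnj a * h z))\<close>,
  or \<open>h1 = 0\<close> if \<open>h\<close> is constant.\<close>
lemma schur_step:
  assumes "schur_function h"
  defines "a \<equiv> h 0" and "H \<equiv> fps_expansion h 0"
  obtains h1 where "schur_function h1"
    "fps_nth H 1 = (1 - a * cnj a) * h1 0"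
    "fps_nth H 2 = (1 - a * cnj a) * (fps_nth (fps_expansion h1 0) 1 - cnj a * (h1 0)\<^sup>2)"
  using assms(1)
proof (cases rule: schur_function_constant_or_norm_less)
  case 1
  have "h has_fps_expansion H"
    using assms(1) unfolding H_def schur_function_def
    by (intro has_fps_expansion_fps_expansion_disc) simp
  then have "H = fps_const a"
    using 1 unfolding a_def by (rule fps_expansion_unique_disc[OF _ has_fps_expansion_const])
  then show ?thesis
    by (intro that[of "\<lambda>_. 0"]) (simp_all add: schur_function_def fps_expansion_def)
next
  case 2
  have "h holomorphic_on ball 0 1"
    using assms(1) by (simp add: schur_function_def)
  then obtain h1 where "schur_function h1"
    and "fps_X * fps_expansion h1 0 * (1 - fps_const (cnj a) * H) = H - fps_const a"
    using 2 unfolding a_def H_def by (rule schur_moebius_quotient)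
  moreover have "fps_nth H 0 = a" "fps_nth (fps_expansion h1 0) 0 = h1 0"
    by (simp_all add: H_def a_def fps_expansion_def)
  ultimately show ?thesis
    using fps_moebius_coeffs[of "fps_expansion h1 0" "cnj a" H a]
    by (intro that[of h1]) (simp_all add: mult.commute)
qed

lemma schur_function_coeffs:
  assumes "schur_function g"
  defines "a \<equiv> g 0" and "G \<equiv> fps_expansion g 0"
  obtains s u where "norm s \<le> 1" "norm u \<le> 1"
    "fps_nth G 1 = (1 - a * cnj a) * s"
    "fps_nth G 2 = (1 - a * cnj a) * ((1 - s * cnj s) * u - cnj a * s\<^sup>2)"
proof -
  obtain g1 where g1: "schur_function g1" and G1: "fps_nth G 1 = (1 - a * cnj a) * g1 0"
    and G2: "fps_nth G 2 = (1 - a * cnj a) * (fps_nth (fps_expansion g1 0) 1 - cnj a * (g1 0)\<^sup>2)"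
    by (rule schur_step[OF assms(1), folded a_def G_def])
  obtain g2 where g2: "schur_function g2"
    and "fps_nth (fps_expansion g1 0) 1 = (1 - g1 0 * cnj (g1 0)) * g2 0"
    by (rule schur_step[OF g1])
  moreover have "norm (g1 0) \<le> 1" "norm (g2 0) \<le> 1"
    using g1 g2 by (simp_all add: schur_function_def)
  ultimately show ?thesis
    using G1 G2 by (intro that[of "g1 0" "g2 0"]) simp_all
qed

section \<open>Caratheodory functions\<close>

lemma Re_pos_imp_norm_cayley_less_1:
  fixes w :: complex
  assumes "Re w > 0"
  shows "w + 1 \<noteq> 0" "norm ((w - 1) / (w + 1)) < 1"
proof -
  show nz: "w + 1 \<noteq> 0"
    using assms by (auto simp: complex_eq_iff)
  have "(norm (w - 1))\<^sup>2 < (norm (w + 1))\<^sup>2"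
    using assms by (simp only: cmod_power2) (simp add: power2_eq_square algebra_simps)
  then have "norm (w - 1) < norm (w + 1)"
    by (rule power2_less_imp_less) simp
  then show "norm ((w - 1) / (w + 1)) < 1"
    using nz by (simp add: norm_divide divide_less_eq)
qed

lemma Re_pos_inverse_cayley:
  fixes u :: complex
  assumes "norm u < 1"
  shows "Re ((1 + u) / (1 - u)) > 0"
proof -
  have "Re ((1 + u) / (1 - u)) = (1 - (norm u)\<^sup>2) / (norm (1 - u))\<^sup>2"
    by (simp only: Re_divide cmod_power2) (simp add: power2_eq_square algebra_simps)
  moreover have "(norm u)\<^sup>2 < 1"
    using assms by (simp add: abs_square_less_1)
  moreover have "u \<noteq> 1"
    using assms by auto
  ultimately show ?thesis
    by simp
qed

lemma fps_cayley_coeffs: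
  fixes G P :: "'a::comm_ring_1 fps"
  assumes "fps_X * G * (P + 1) = P - 1"
  shows "fps_nth P 0 = 1" "fps_nth P 1 = 2 * fps_nth G 0"
    "fps_nth P 2 = 2 * (fps_nth G 0)\<^sup>2 + 2 * fps_nth G 1"
    "fps_nth P 3 = 2 * (fps_nth G 0)^3 + 4 * fps_nth G 0 * fps_nth G 1 + 2 * fps_nth G 2"
proof -
  have coeff: "fps_nth (fps_X * G * (P + 1)) n = fps_nth (P - 1) n" for n
    using assms by simp
  show P0: "fps_nth P 0 = 1"
    using coeff[of 0] by simp
  show P1: "fps_nth P 1 = 2 * fps_nth G 0"
    using coeff[of 1] P0 by (simp add: fps_mult_nth_1 mult.commute)
  show P2: "fps_nth P 2 = 2 * (fps_nth G 0)\<^sup>2 + 2 * fps_nth G 1"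
    using coeff[of 2] P0 P1 by (simp add: fps_mult_nth eval_nat_numeral power2_eq_square algebra_simps)
  show "fps_nth P 3 = 2 * (fps_nth G 0)^3 + 4 * fps_nth G 0 * fps_nth G 1 + 2 * fps_nth G 2"
    using coeff[of 3] P0 P1 P2
    by (simp add: fps_mult_nth eval_nat_numeral power2_eq_square power3_eq_cube algebra_simps)
qed

lemma caratheodory_cayley_schur:
  assumes hol: "p holomorphic_on ball 0 1" and pos: "\<forall>z\<in>ball 0 1. Re (p z) > 0" and p0: "p 0 = 1"
  defines "P \<equiv> fps_expansion p 0"
  obtains g where "schur_function g" "fps_X * fps_expansion g 0 * (P + 1) = P - 1"
proof -
  have nz: "p z + 1 \<noteq> 0" if "z \<in> ball 0 1" for z
    using Re_pos_imp_norm_cayley_less_1(1) pos that by blast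
  define \<omega> where "\<omega> z = (p z - 1) / (p z + 1)" for z
  have \<omega>_hol: "\<omega> holomorphic_on ball 0 1"
    unfolding \<omega>_def[abs_def] using nz by (intro holomorphic_intros hol) auto
  obtain g where g: "schur_function g" and W: "fps_expansion \<omega> 0 = fps_X * fps_expansion g 0"
  proof (rule schwarz_quotient[OF \<omega>_hol])
    show "\<omega> 0 = 0"
      by (simp add: \<omega>_def p0)
    show "norm (\<omega> z) < 1" if "norm z < 1" for z
      using Re_pos_imp_norm_cayley_less_1(2) pos that by (simp add: \<omega>_def)
  qed
  have "fps_X * fps_expansion g 0 * (P + 1) = P - 1"
  proof (rule fps_expansion_unique_disc)
    show "(\<lambda>z. \<omega> z * (p z + 1)) has_fps_expansion fps_X * fps_expansion g 0 * (P + 1)"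
      unfolding P_def W[symmetric]
      by (intro has_fps_expansion_mult has_fps_expansion_add has_fps_expansion_1
          has_fps_expansion_fps_expansion_disc \<omega>_hol hol)
    show "(\<lambda>z. p z - 1) has_fps_expansion P - 1"
      unfolding P_def
      by (intro has_fps_expansion_diff has_fps_expansion_1 has_fps_expansion_fps_expansion_disc hol)
    show "\<forall>z\<in>ball 0 1. \<omega> z * (p z + 1) = p z - 1"
      using nz by (simp add: \<omega>_def)
  qed
  then show ?thesis
    using g that by blast
qed

lemma caratheodory_coeffs:
  assumes "p holomorphic_on ball 0 1" "\<forall>z\<in>ball 0 1. Re (p z) > 0" "p 0 = 1"
  defines "P \<equiv> fps_expansion p 0"
  obtains a s u :: complex where "norm a \<le> 1" "norm s \<le> 1" "norm u \<le> 1"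
    "fps_nth P 1 = 2 * a"
    "fps_nth P 2 = 2 * a\<^sup>2 + 2 * ((1 - a * cnj a) * s)"
    "fps_nth P 3 = 2 * a^3 + 4 * a * ((1 - a * cnj a) * s)
                   + 2 * ((1 - a * cnj a) * ((1 - s * cnj s) * u - cnj a * s\<^sup>2))"
proof -
  obtain g where g: "schur_function g" and "fps_X * fps_expansion g 0 * (P + 1) = P - 1"
    unfolding P_def by (rule caratheodory_cayley_schur[OF assms(1-3)])
  note P = fps_cayley_coeffs[OF this(2)]
  define G where "G = fps_expansion g 0"
  obtain s u where "norm s \<le> 1" "norm u \<le> 1"
    and G1: "fps_nth G 1 = (1 - g 0 * cnj (g 0)) * s"
    and G2: "fps_nth G 2 = (1 - g 0 * cnj (g 0)) * ((1 - s * cnj s) * u - cnj (g 0) * s\<^sup>2)"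
    by (rule schur_function_coeffs[OF g, folded G_def])
  moreover have G0: "fps_nth G 0 = g 0" and "norm (g 0) \<le> 1"
    using g by (simp_all add: G_def fps_expansion_def schur_function_def)
  moreover have "fps_nth P 2 = 2 * (g 0)\<^sup>2 + 2 * ((1 - g 0 * cnj (g 0)) * s)"
    unfolding P(3) G_def[symmetric] G0 G1 by (simp add: algebra_simps)
  moreover have "fps_nth P 3 = 2 * g 0 ^ 3 + 4 * g 0 * ((1 - g 0 * cnj (g 0)) * s)
      + 2 * ((1 - g 0 * cnj (g 0)) * ((1 - s * cnj s) * u - cnj (g 0) * s\<^sup>2))"
    unfolding P(4) G_def[symmetric] G0 G1 G2 by (simp add: algebra_simps)
  ultimately show ?thesis
    using P(2) G0 unfolding G_def by (intro that[of "g 0" s u]) simp_all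
qed

section \<open>The class \<open>\<A>\<^sub>\<beta>\<close> and Caratheodory functions\<close>

lemma class_A_quotient:
  assumes "class_A f"
  defines "q \<equiv> \<lambda>z. if z = 0 then 1 else f z / z"
  shows "q holomorphic_on ball 0 1" "q has_fps_expansion fps_shift 1 (fps_expansion f 0)"
proof -
  have hol: "f holomorphic_on ball 0 1" and f0: "f 0 = 0" and f'0: "deriv f 0 = 1"
    using assms(1) by (simp_all add: class_A_def)
  have "q = (\<lambda>z. if z = 0 then deriv f 0 else (f z - f 0) / (z - 0))"
    by (auto simp: q_def f0 f'0)
  then show "q holomorphic_on ball 0 1"
    using pole_lemma[OF hol, of 0] by simp
  define F where "F = fps_expansion f 0"
  have F01: "fps_nth F 0 = 0" "fps_nth F 1 = 1"
    by (simp_all add: F_def fps_expansion_def f0 f'0)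
  then have "1 \<le> subdegree F"
    by (intro subdegree_geI) auto
  then have "(\<lambda>z. if z = 0 then fps_nth F 1 else f z / z ^ 1) has_fps_expansion fps_shift 1 F"
    unfolding F_def by (rule has_fps_expansion_shift[OF has_fps_expansion_fps_expansion_disc[OF hol]]) simp
  then show "q has_fps_expansion fps_shift 1 (fps_expansion f 0)"
    unfolding F_def[symmetric] q_def by (simp only: F01(2) power_one_right)
qed

lemma class_A_beta_caratheodory:
  assumes "class_A_beta \<beta> f"
  obtains p where "p holomorphic_on ball 0 1" "\<forall>z\<in>ball 0 1. Re (p z) > 0" "p 0 = 1"
    "\<And>n. fps_nth (fps_expansion p 0) n = of_real (1 + real n * (1 - \<beta>)) * taylor_coeff f (Suc n)"
proof -
  have A: "class_A f" and hol: "f holomorphic_on ball 0 1" and f'0: "deriv f 0 = 1"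
    and pos: "\<forall>z\<in>ball 0 1. Re (of_real \<beta> * (if z = 0 then 1 else f z / z)
                                + of_real (1 - \<beta>) * deriv f z) > 0"
    using assms by (auto simp: class_A_beta_def class_A_def)
  define q where "q z = (if z = 0 then 1 else f z / z)" for z
  define p where "p z = of_real \<beta> * q z + of_real (1 - \<beta>) * deriv f z" for z
  have p_hol: "p holomorphic_on ball 0 1"
    using class_A_quotient(1)[OF A] unfolding p_def[abs_def] q_def[abs_def]
    by (intro holomorphic_intros holomorphic_deriv hol) auto
  define F where "F = fps_expansion f 0"
  have "p has_fps_expansion
      fps_const (of_real \<beta>) * fps_shift 1 F + fps_const (of_real (1 - \<beta>)) * fps_deriv F"
    using class_A_quotient(2)[OF A] unfolding p_def[abs_def] q_def[abs_def] F_def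
    by (intro has_fps_expansion_add has_fps_expansion_cmult_left has_fps_expansion_deriv
        has_fps_expansion_fps_expansion_disc hol)
  then have P: "fps_expansion p 0
      = fps_const (of_real \<beta>) * fps_shift 1 F + fps_const (of_real (1 - \<beta>)) * fps_deriv F"
    by (rule fps_expansion_eqI)
  show ?thesis
  proof (rule that[OF p_hol])
    show "\<forall>z\<in>ball 0 1. Re (p z) > 0"
      using pos by (simp add: p_def q_def)
    show "p 0 = 1"
      by (simp add: p_def q_def f'0 flip: of_real_add)
    show "fps_nth (fps_expansion p 0) n = of_real (1 + real n * (1 - \<beta>)) * taylor_coeff f (Suc n)"
      for n
      by (simp add: P taylor_coeff_eq_fps_nth F_def algebra_simps)
  qed
qed

text \<open>The Taylor series of the solution \<open>f\<close> of \<open>\<beta> f(z)/z + (1 - \<beta>) f'(z) = p(z)\<close>, where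
  \<open>P\<close> is the Taylor series of \<open>p\<close>.\<close>
definition A_beta_series :: "real \<Rightarrow> complex fps \<Rightarrow> complex fps" where
  "A_beta_series \<beta> P = fps_X * Abs_fps (\<lambda>n. fps_nth P n / of_real (1 + real n * (1 - \<beta>)))"

lemma fps_nth_A_beta_series:
  "fps_nth (A_beta_series \<beta> P) 0 = 0"
  "fps_nth (A_beta_series \<beta> P) (Suc n) = fps_nth P n / of_real (1 + real n * (1 - \<beta>))"
  by (simp_all add: A_beta_series_def)

lemma A_beta_series_equation:
  fixes P :: "complex fps"
  assumes "\<beta> \<le> 1"
  defines "F \<equiv> A_beta_series \<beta> P"
  shows "fps_const (of_real \<beta>) * fps_shift 1 F + fps_const (of_real (1 - \<beta>)) * fps_deriv F = P"
proof (rule fps_ext)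
  fix n
  have "1 + real n * (1 - \<beta>) > 0"
    using assms(1) by (simp add: add_pos_nonneg)
  then have nz: "of_real (1 + real n * (1 - \<beta>)) \<noteq> (0::complex)"
    by (simp only: of_real_eq_0_iff)
  have "fps_nth (fps_const (of_real \<beta>) * fps_shift 1 F + fps_const (of_real (1 - \<beta>)) * fps_deriv F) n
      = of_real (\<beta> + (1 - \<beta>) * real (Suc n)) * fps_nth F (Suc n)"
    by (simp add: algebra_simps)
  also have "\<beta> + (1 - \<beta>) * real (Suc n) = 1 + real n * (1 - \<beta>)"
    by (simp add: algebra_simps)
  finally show "fps_nth (fps_const (of_real \<beta>) * fps_shift 1 F
      + fps_const (of_real (1 - \<beta>)) * fps_deriv F) n = fps_nth P n"
    by (simp only: F_def fps_nth_A_beta_series times_divide_eq_right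
        nonzero_mult_div_cancel_left[OF nz])
qed

lemma fps_conv_radius_A_beta_series:
  assumes "\<beta> \<le> 1"
  shows "fps_conv_radius P \<le> fps_conv_radius (A_beta_series \<beta> P)"
proof -
  define Q where "Q = Abs_fps (\<lambda>n. fps_nth P n / of_real (1 + real n * (1 - \<beta>)))"
  have "norm (fps_nth Q n) \<le> norm (fps_nth P n)" for n
  proof -
    have "1 \<le> 1 + real n * (1 - \<beta>)"
      using assms by simp
    moreover have "fps_nth Q n = fps_nth P n / of_real (1 + real n * (1 - \<beta>))"
      by (simp add: Q_def)
    ultimately show ?thesis
      by (simp only: norm_divide norm_of_real) (simp add: divide_le_eq mult_le_cancel_left1)
  qed
  then have "fps_conv_radius P \<le> fps_conv_radius Q"
    by (rule fps_conv_radius_le_if_norm_le)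
  also have "\<dots> \<le> fps_conv_radius (A_beta_series \<beta> P)"
    using fps_conv_radius_mult[of fps_X Q] by (simp add: A_beta_series_def Q_def)
  finally show ?thesis .
qed

lemma one_le_fps_conv_radius_A_beta_series:
  assumes "\<beta> \<le> 1" "p holomorphic_on ball 0 1"
  shows "1 \<le> fps_conv_radius (A_beta_series \<beta> (fps_expansion p 0))"
proof -
  have "1 \<le> fps_conv_radius (fps_expansion p 0)"
    using assms(2) by (intro conv_radius_fps_expansion) (simp add: one_ereal_def)
  then show ?thesis
    using fps_conv_radius_A_beta_series[OF assms(1)] by (rule order.trans)
qed

lemma eval_A_beta_series:
  assumes "\<beta> \<le> 1" and hol: "p holomorphic_on ball 0 1" and p0: "p 0 = 1" and z: "z \<in> ball 0 1"
  defines "F \<equiv> A_beta_series \<beta> (fps_expansion p 0)"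
  shows "of_real \<beta> * (if z = 0 then 1 else eval_fps F z / z)
           + of_real (1 - \<beta>) * deriv (eval_fps F) z = p z"
proof -
  have "norm z < fps_conv_radius G" if "1 \<le> fps_conv_radius G" for G
    using z that by (auto intro: less_le_trans[of _ 1] simp: one_ereal_def)
  moreover have rF: "1 \<le> fps_conv_radius F"
    unfolding F_def by (rule one_le_fps_conv_radius_A_beta_series[OF assms(1) hol])
  ultimately have rz: "norm z < fps_conv_radius F" "norm z < fps_conv_radius (fps_deriv F)"
    using order_trans[OF rF fps_conv_radius_deriv] by blast+
  have F1: "fps_nth F 1 = 1"
    using fps_nth_A_beta_series(2)[of \<beta> _ 0] by (simp add: F_def fps_expansion_def p0)
  have "1 \<le> subdegree F"
    using fps_nth_A_beta_series(1) F1 by (intro subdegree_geI) (auto simp: F_def)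
  have "(if z = 0 then 1 else eval_fps F z / z) = eval_fps (fps_shift 1 F) z"
    using eval_fps_shift[OF \<open>1 \<le> subdegree F\<close> rz(1)] by (simp only: F1 power_one_right)
  moreover have "deriv (eval_fps F) z = eval_fps (fps_deriv F) z"
    by (rule eval_fps_deriv[OF rz(1), symmetric])
  ultimately have "of_real \<beta> * (if z = 0 then 1 else eval_fps F z / z)
        + of_real (1 - \<beta>) * deriv (eval_fps F) z
      = eval_fps (fps_const (of_real \<beta>) * fps_shift 1 F + fps_const (of_real (1 - \<beta>)) * fps_deriv F) z"
    using rz by (simp add: eval_fps_linear_combination)
  also have "\<dots> = eval_fps (fps_expansion p 0) z"
    unfolding F_def A_beta_series_equation[OF assms(1)] ..
  also have "\<dots> = p (0 + z)"
    using hol z by (intro eval_fps_expansion'[where r = 1]) (simp_all add: one_ereal_def)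
  finally show ?thesis
    by simp
qed

lemma class_A_beta_A_beta_series:
  assumes "\<beta> \<le> 1" "p holomorphic_on ball 0 1" "\<forall>z\<in>ball 0 1. Re (p z) > 0" "p 0 = 1"
  shows "class_A_beta \<beta> (eval_fps (A_beta_series \<beta> (fps_expansion p 0)))"
proof -
  define F where "F = A_beta_series \<beta> (fps_expansion p 0)"
  have rF: "1 \<le> fps_conv_radius F"
    unfolding F_def by (rule one_le_fps_conv_radius_A_beta_series[OF assms(1,2)])
  then have "eval_fps F holomorphic_on ball 0 1"
    by (intro holomorphic_on_eval_fps subsetI)
       (auto intro: less_le_trans[of _ 1] simp: one_ereal_def)
  moreover have "deriv (eval_fps F) 0 = 1"
  proof -
    have "fps_nth F 1 = 1"
      using fps_nth_A_beta_series(2)[of \<beta> _ 0] by (simp add: F_def fps_expansion_def assms(4))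
    moreover have "(0::ereal) < 1"
      by simp
    then have "norm (0::complex) < fps_conv_radius F"
      using rF by (simp only: norm_zero zero_ereal_def[symmetric])
    ultimately show ?thesis
      using eval_fps_deriv[of 0 F] by (simp add: eval_fps_at_0)
  qed
  moreover have "fps_nth F 0 = 0"
    by (simp add: F_def fps_nth_A_beta_series)
  moreover have "Re (of_real \<beta> * (if z = 0 then 1 else eval_fps F z / z)
                      + of_real (1 - \<beta>) * deriv (eval_fps F) z) > 0" if "z \<in> ball 0 1" for z
    unfolding F_def eval_A_beta_series[OF assms(1,2,4) that] using assms(3) that by blast
  ultimately show ?thesis
    unfolding F_def[symmetric] by (simp add: class_A_beta_def class_A_def eval_fps_at_0)
qed

section \<open>Bounds for the logarithmic coefficients\<close>

lemma class_A_beta_taylor_coeffs: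
  assumes "\<beta> \<le> 1" "class_A_beta \<beta> f"
  defines "T \<equiv> 1 - \<beta>"
  obtains a s u where "norm a \<le> 1" "norm s \<le> 1" "norm u \<le> 1"
    "taylor_coeff f 2 = 2 * a / of_real (1 + T)"
    "taylor_coeff f 3 = (2 * a\<^sup>2 + 2 * ((1 - a * cnj a) * s)) / of_real (1 + 2 * T)"
    "taylor_coeff f 4 = (2 * a^3 + 4 * a * ((1 - a * cnj a) * s)
        + 2 * ((1 - a * cnj a) * ((1 - s * cnj s) * u - cnj a * s\<^sup>2))) / of_real (1 + 3 * T)"
proof -
  obtain p where p: "p holomorphic_on ball 0 1" "\<forall>z\<in>ball 0 1. Re (p z) > 0" "p 0 = 1"
    and P: "\<And>n. fps_nth (fps_expansion p 0) n = of_real (1 + real n * T) * taylor_coeff f (Suc n)"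
    using class_A_beta_caratheodory[OF assms(2)] unfolding T_def by blast
  have pos: "1 + real n * T > 0" for n
    using assms(1) by (simp add: T_def add_pos_nonneg)
  have nz: "of_real (1 + real n * T) \<noteq> (0::complex)" for n
    using pos[of n] unfolding of_real_eq_0_iff by linarith
  have taylor_Suc: "taylor_coeff f (Suc n) = fps_nth (fps_expansion p 0) n / of_real (1 + real n * T)"
    for n using nz[of n] by (simp only: P) (rule nonzero_mult_div_cancel_left[symmetric])
  have "Suc 2 = 3" "Suc 3 = 4"
    by simp_all
  note taylor = taylor_Suc[of 1, unfolded Suc_1 of_nat_1 mult_1]
    taylor_Suc[of 2, unfolded \<open>Suc 2 = 3\<close> of_nat_numeral]
    taylor_Suc[of 3, unfolded \<open>Suc 3 = 4\<close> of_nat_numeral]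
  obtain a s u where "norm a \<le> 1" "norm s \<le> 1" "norm u \<le> 1"
    and "fps_nth (fps_expansion p 0) 1 = 2 * a"
    "fps_nth (fps_expansion p 0) 2 = 2 * a\<^sup>2 + 2 * ((1 - a * cnj a) * s)"
    "fps_nth (fps_expansion p 0) 3 = 2 * a^3 + 4 * a * ((1 - a * cnj a) * s)
                   + 2 * ((1 - a * cnj a) * ((1 - s * cnj s) * u - cnj a * s\<^sup>2))"
    by (rule caratheodory_coeffs[OF p])
  then show ?thesis
    by (intro that[of a s u]) (simp_all only: taylor)
qed

lemma log_coeff_eq:
  "log_coeff f 1 = taylor_coeff f 2 / 2"
  "log_coeff f 2 = (taylor_coeff f 3 - (taylor_coeff f 2)\<^sup>2 / 2) / 2"
  "log_coeff f 3 = (taylor_coeff f 4 - taylor_coeff f 2 * taylor_coeff f 3 + (taylor_coeff f 2)^3 / 3) / 2"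
  by (simp_all add: log_coeff_def Let_def)

lemma norm_divide_of_real_pos:
  fixes z :: complex
  assumes "0 < r"
  shows "norm (z / of_real r) = norm z / r"
  using assms by (simp only: norm_divide norm_of_real abs_of_pos)

lemma log_coeff_2_identity:
  fixes a b :: complex and T :: real
  assumes "0 \<le> T"
  shows "((2 * a\<^sup>2 + 2 * b) / of_real (1 + 2 * T) - (2 * a / of_real (1 + T))\<^sup>2 / 2) / 2
       = (b + of_real (T\<^sup>2 / (1 + T)\<^sup>2) * a\<^sup>2) / of_real (1 + 2 * T)"
proof -
  define p q where "p = complex_of_real (1 + T)" and "q = complex_of_real (1 + 2 * T)"
  have "1 + T \<noteq> 0" "1 + 2 * T \<noteq> 0"
    using assms by linarith+
  then have nz: "p \<noteq> 0" "q \<noteq> 0"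
    by (simp_all only: p_def q_def of_real_eq_0_iff not_False_eq_True)
  have weight: "of_real (T\<^sup>2 / (1 + T)\<^sup>2) = (p - 1)\<^sup>2 / p\<^sup>2"
    by (simp add: p_def)
  have rel: "q = 2 * p - 1"
    by (simp add: p_def q_def)
  show ?thesis
    unfolding weight p_def[symmetric] q_def[symmetric] using nz
    by (simp add: field_simps) (simp only: rel, algebra)
qed

lemma log_coeff_3_identity:
  fixes a b c :: complex and T :: real
  assumes "0 \<le> T"
  shows "((2 * a^3 + 4 * a * b + 2 * c) / of_real (1 + 3 * T)
          - (2 * a / of_real (1 + T)) * ((2 * a\<^sup>2 + 2 * b) / of_real (1 + 2 * T))
          + (2 * a / of_real (1 + T))^3 / 3) / 2
       = (c + of_real (4 * T\<^sup>2 / ((1 + T) * (1 + 2 * T))) * a * b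
            + of_real ((1 + 5 * T + 9 * T\<^sup>2 + 3 * T^3 + 6 * T^4) / (3 * (1 + T)^3 * (1 + 2 * T))) * a^3)
         / of_real (1 + 3 * T)"
proof -
  define p q r where "p = complex_of_real (1 + T)" and "q = complex_of_real (1 + 2 * T)"
    and "r = complex_of_real (1 + 3 * T)"
  have "1 + T \<noteq> 0" "1 + 2 * T \<noteq> 0" "1 + 3 * T \<noteq> 0"
    using assms by linarith+
  then have nz: "p \<noteq> 0" "q \<noteq> 0" "r \<noteq> 0"
    by (simp_all only: p_def q_def r_def of_real_eq_0_iff not_False_eq_True)
  have weights: "of_real (4 * T\<^sup>2 / ((1 + T) * (1 + 2 * T))) = 4 * (p - 1)\<^sup>2 / (p * q)"
    "of_real ((1 + 5 * T + 9 * T\<^sup>2 + 3 * T^3 + 6 * T^4) / (3 * (1 + T)^3 * (1 + 2 * T)))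
       = (1 + 5 * (p - 1) + 9 * (p - 1)\<^sup>2 + 3 * (p - 1)^3 + 6 * (p - 1)^4) / (3 * p^3 * q)"
    by (simp_all add: p_def q_def)
  have rel: "q = 2 * p - 1" "r = 3 * p - 2"
    by (simp_all add: p_def q_def r_def)
  show ?thesis
    unfolding weights p_def[symmetric] q_def[symmetric] r_def[symmetric] using nz
    by (simp add: field_simps) (simp only: rel, algebra)
qed

lemma log_coeff_3_weights_le:
  fixes T :: real
  assumes "0 \<le> T" "T \<le> 1"
  shows "4 * T\<^sup>2 / ((1 + T) * (1 + 2 * T)) \<le> 2/3"
    "(1 + 5 * T + 9 * T\<^sup>2 + 3 * T^3 + 6 * T^4) / (3 * (1 + T)^3 * (1 + 2 * T)) \<le> 7/9"
proof -
  have "T\<^sup>2 \<le> T" "T^4 \<le> T^3"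
    using assms by (simp_all add: power2_eq_square power3_eq_cube power4_eq_xxxx mult_left_le)
  have pos: "0 < (1 + T) * (1 + 2 * T)" "0 < 3 * (1 + T)^3 * (1 + 2 * T)"
    using assms by simp_all
  have "4 * T\<^sup>2 \<le> 2/3 * ((1 + T) * (1 + 2 * T))"
    using \<open>T\<^sup>2 \<le> T\<close> assms by (simp add: algebra_simps power2_eq_square)
  then show "4 * T\<^sup>2 / ((1 + T) * (1 + 2 * T)) \<le> 2/3"
    by (simp add: pos_divide_le_eq[OF pos(1)])
  have "3 * (1 + T)^3 * (1 + 2 * T) = 3 + 15 * T + 27 * T\<^sup>2 + 21 * T^3 + 6 * T^4"
    by (simp add: algebra_simps power2_eq_square power3_eq_cube power4_eq_xxxx)
  moreover have "0 \<le> T\<^sup>2" "0 \<le> T^3"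
    using assms by simp_all
  ultimately have "1 + 5 * T + 9 * T\<^sup>2 + 3 * T^3 + 6 * T^4 \<le> 7/9 * (3 * (1 + T)^3 * (1 + 2 * T))"
    using \<open>T^4 \<le> T^3\<close> assms by linarith
  then show "(1 + 5 * T + 9 * T\<^sup>2 + 3 * T^3 + 6 * T^4) / (3 * (1 + T)^3 * (1 + 2 * T)) \<le> 7/9"
    by (simp only: pos_divide_le_eq[OF pos(2)])
qed

lemma norm_schur_quadratic_le:
  fixes a s :: complex and l :: real
  assumes "norm a \<le> 1" "norm s \<le> 1" "0 \<le> l" "l \<le> 1"
  shows "norm ((1 - a * cnj a) * s + of_real l * a\<^sup>2) \<le> 1"
proof -
  have a2: "norm a ^ 2 \<le> 1"
    using assms(1) by (simp add: power_le_one)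
  have "1 - a * cnj a = of_real (1 - norm a ^ 2)"
    by (simp flip: complex_norm_square)
  then have "norm ((1 - a * cnj a) * s + of_real l * a\<^sup>2)
      \<le> norm (of_real (1 - norm a ^ 2) * s) + norm (of_real l * a\<^sup>2)"
    by (metis norm_triangle_ineq)
  also have "\<dots> = (1 - norm a ^ 2) * norm s + l * norm a ^ 2"
    by (simp only: norm_mult norm_power norm_of_real) (use a2 assms(3) in simp)
  also have "\<dots> \<le> (1 - norm a ^ 2) * 1 + 1 * norm a ^ 2"
    using a2 assms by (intro add_mono mult_mono) auto
  finally show ?thesis
    by simp
qed

lemma schur_cubic_real_bound:
  fixes x y \<mu> \<nu> :: real
  assumes "0 \<le> x" "x \<le> 1" "0 \<le> y" "y \<le> 1" "0 \<le> \<mu>" "\<mu> \<le> 2/3" "0 \<le> \<nu>" "\<nu> \<le> 7/9"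
  shows "(1 - x\<^sup>2) * (1 - y\<^sup>2) + (1 - x\<^sup>2) * x * y\<^sup>2 + \<mu> * x * (1 - x\<^sup>2) * y + \<nu> * x^3 \<le> 1"
proof -
  define t where "t = (1 - x) * y"
  have "\<mu> * x * t - t\<^sup>2 \<le> \<mu>\<^sup>2 * x\<^sup>2 / 4"
    using zero_le_power2[of "t - \<mu> * x / 2"] by (simp add: algebra_simps power2_eq_square)
  then have square: "(1 + x) * (\<mu> * x * t - t\<^sup>2) \<le> (1 + x) * (\<mu>\<^sup>2 * x\<^sup>2 / 4)"
    using assms by (intro mult_left_mono) auto
  have "(1 + x) * \<mu>\<^sup>2 \<le> 2 * (2/3)\<^sup>2"
    using assms by (intro mult_mono power_mono) auto
  moreover have "\<nu> * x \<le> 7/9"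
    using assms mult_mono[of \<nu> "7/9" x 1] by auto
  ultimately have rest: "x\<^sup>2 * ((1 + x) * \<mu>\<^sup>2 / 4 + \<nu> * x) \<le> x\<^sup>2 * 1"
    by (intro mult_left_mono) (auto simp: power2_eq_square)
  have "(1 - x\<^sup>2) * (1 - y\<^sup>2) + (1 - x\<^sup>2) * x * y\<^sup>2 + \<mu> * x * (1 - x\<^sup>2) * y + \<nu> * x^3
      = 1 - x\<^sup>2 + (1 + x) * (\<mu> * x * t - t\<^sup>2) + \<nu> * x^3"
    by (simp add: t_def algebra_simps power2_eq_square power3_eq_cube)
  also have "\<dots> \<le> 1 - x\<^sup>2 + (1 + x) * (\<mu>\<^sup>2 * x\<^sup>2 / 4) + \<nu> * x^3"
    using square by linarith
  also have "\<dots> = 1 - x\<^sup>2 + x\<^sup>2 * ((1 + x) * \<mu>\<^sup>2 / 4 + \<nu> * x)"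
    by (simp add: algebra_simps power2_eq_square power3_eq_cube)
  also have "\<dots> \<le> 1"
    using rest by simp
  finally show ?thesis .
qed

lemma norm_schur_cubic_le:
  fixes a s u :: complex and \<mu> \<nu> :: real
  assumes "norm a \<le> 1" "norm s \<le> 1" "norm u \<le> 1" "0 \<le> \<mu>" "\<mu> \<le> 2/3" "0 \<le> \<nu>" "\<nu> \<le> 7/9"
  shows "norm ((1 - a * cnj a) * ((1 - s * cnj s) * u - cnj a * s\<^sup>2)
              + of_real \<mu> * a * ((1 - a * cnj a) * s) + of_real \<nu> * a^3) \<le> 1"
proof -
  define x y where "x = norm a" and "y = norm s"
  have x: "0 \<le> x" "x \<le> 1" and y: "0 \<le> y" "y \<le> 1"
    using assms by (auto simp: x_def y_def)
  have "1 - a * cnj a = of_real (1 - x\<^sup>2)" "1 - s * cnj s = of_real (1 - y\<^sup>2)"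
    by (simp_all add: x_def y_def flip: complex_norm_square)
  moreover have "x\<^sup>2 \<le> 1" "y\<^sup>2 \<le> 1"
    using x y by (simp_all add: power_le_one)
  ultimately have na: "norm (1 - a * cnj a) = 1 - x\<^sup>2" and ns: "norm (1 - s * cnj s) = 1 - y\<^sup>2"
    by (simp_all only: norm_of_real abs_of_nonneg diff_ge_0_iff_ge)
  have "norm ((1 - s * cnj s) * u - cnj a * s\<^sup>2) \<le> (1 - y\<^sup>2) * norm u + x * y\<^sup>2"
    using norm_triangle_ineq4[of "(1 - s * cnj s) * u" "cnj a * s\<^sup>2"]
    by (simp only: norm_mult norm_power ns complex_mod_cnj x_def y_def)
  also have "\<dots> \<le> 1 - y\<^sup>2 + x * y\<^sup>2"
    using \<open>y\<^sup>2 \<le> 1\<close> assms(3) by (simp add: mult_left_le)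
  finally have "norm ((1 - a * cnj a) * ((1 - s * cnj s) * u - cnj a * s\<^sup>2))
      \<le> (1 - x\<^sup>2) * (1 - y\<^sup>2 + x * y\<^sup>2)"
    unfolding norm_mult na using \<open>x\<^sup>2 \<le> 1\<close> by (intro mult_left_mono) auto
  moreover have "norm (of_real \<mu> * a * ((1 - a * cnj a) * s)) = \<mu> * x * (1 - x\<^sup>2) * y"
    using assms(4) by (simp add: norm_mult na x_def y_def)
  moreover have "norm (of_real \<nu> * a^3) = \<nu> * x^3"
    using assms(6) by (simp add: norm_mult norm_power x_def)
  ultimately have "norm ((1 - a * cnj a) * ((1 - s * cnj s) * u - cnj a * s\<^sup>2)
              + of_real \<mu> * a * ((1 - a * cnj a) * s) + of_real \<nu> * a^3)
      \<le> (1 - x\<^sup>2) * (1 - y\<^sup>2 + x * y\<^sup>2) + \<mu> * x * (1 - x\<^sup>2) * y + \<nu> * x^3"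
    by (smt (verit) norm_triangle_ineq)
  also have "\<dots> \<le> 1"
    using schur_cubic_real_bound[OF x y assms(4-7)] by (simp add: algebra_simps)
  finally show ?thesis .
qed

lemma norm_log_coeff_1_le:
  assumes "\<beta> \<le> 1" "class_A_beta \<beta> f"
  shows "norm (log_coeff f 1) \<le> 1 / (2 - \<beta>)"
proof -
  have "1 + (1 - \<beta>) = 2 - \<beta>"
    by simp
  then obtain a where "norm a \<le> 1" and a2: "taylor_coeff f 2 = 2 * a / of_real (2 - \<beta>)"
    using class_A_beta_taylor_coeffs[OF assms] by metis
  have "log_coeff f 1 = a / of_real (2 - \<beta>)"
    unfolding log_coeff_eq a2 by (metis times_divide_eq_right nonzero_mult_div_cancel_left zero_neq_numeral)
  moreover have "0 < 2 - \<beta>"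
    using assms(1) by simp
  ultimately have "norm (log_coeff f 1) = norm a / (2 - \<beta>)"
    by (simp only: norm_divide_of_real_pos)
  also have "\<dots> \<le> 1 / (2 - \<beta>)"
    using \<open>norm a \<le> 1\<close> by (rule divide_right_mono) (use assms(1) in simp)
  finally show ?thesis .
qed

lemma norm_log_coeff_2_le:
  assumes "0 \<le> \<beta>" "\<beta> \<le> 1" "class_A_beta \<beta> f"
  shows "norm (log_coeff f 2) \<le> 1 / (3 - 2 * \<beta>)"
proof -
  define T where "T = 1 - \<beta>"
  have T: "0 \<le> T" "T \<le> 1"
    using assms(1,2) by (simp_all add: T_def)
  obtain a s where as: "norm a \<le> 1" "norm s \<le> 1"
    and a2: "taylor_coeff f 2 = 2 * a / of_real (1 + T)"
    and a3: "taylor_coeff f 3 = (2 * a\<^sup>2 + 2 * ((1 - a * cnj a) * s)) / of_real (1 + 2 * T)"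
    using class_A_beta_taylor_coeffs[OF assms(2,3), folded T_def] by blast
  define l where "l = T\<^sup>2 / (1 + T)\<^sup>2"
  have l: "0 \<le> l" "l \<le> 1"
    using T by (simp_all add: l_def divide_le_eq_1 power_mono)
  have "log_coeff f 2 = ((1 - a * cnj a) * s + of_real l * a\<^sup>2) / of_real (1 + 2 * T)"
    unfolding log_coeff_eq a2 a3 l_def by (rule log_coeff_2_identity[OF T(1)])
  moreover have "0 < 1 + 2 * T"
    using T by simp
  ultimately have "norm (log_coeff f 2) = norm ((1 - a * cnj a) * s + of_real l * a\<^sup>2) / (1 + 2 * T)"
    by (simp only: norm_divide_of_real_pos)
  also have "\<dots> \<le> 1 / (1 + 2 * T)"
    using norm_schur_quadratic_le[OF as l] by (rule divide_right_mono) (use T in simp)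
  also have "1 + 2 * T = 3 - 2 * \<beta>"
    by (simp add: T_def)
  finally show ?thesis .
qed

lemma norm_log_coeff_3_le:
  assumes "0 \<le> \<beta>" "\<beta> \<le> 1" "class_A_beta \<beta> f"
  shows "norm (log_coeff f 3) \<le> 1 / (4 - 3 * \<beta>)"
proof -
  define T where "T = 1 - \<beta>"
  have T: "0 \<le> T" "T \<le> 1"
    using assms(1,2) by (simp_all add: T_def)
  obtain a s u where asu: "norm a \<le> 1" "norm s \<le> 1" "norm u \<le> 1"
    and a2: "taylor_coeff f 2 = 2 * a / of_real (1 + T)"
    and a3: "taylor_coeff f 3 = (2 * a\<^sup>2 + 2 * ((1 - a * cnj a) * s)) / of_real (1 + 2 * T)"
    and a4: "taylor_coeff f 4 = (2 * a^3 + 4 * a * ((1 - a * cnj a) * s)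
        + 2 * ((1 - a * cnj a) * ((1 - s * cnj s) * u - cnj a * s\<^sup>2))) / of_real (1 + 3 * T)"
    by (rule class_A_beta_taylor_coeffs[OF assms(2,3), folded T_def])
  define \<mu> \<nu> where "\<mu> = 4 * T\<^sup>2 / ((1 + T) * (1 + 2 * T))"
    and "\<nu> = (1 + 5 * T + 9 * T\<^sup>2 + 3 * T^3 + 6 * T^4) / (3 * (1 + T)^3 * (1 + 2 * T))"
  have weights: "0 \<le> \<mu>" "\<mu> \<le> 2/3" "0 \<le> \<nu>" "\<nu> \<le> 7/9"
    using T log_coeff_3_weights_le[OF T] by (simp_all add: \<mu>_def \<nu>_def)
  have "log_coeff f 3 = ((1 - a * cnj a) * ((1 - s * cnj s) * u - cnj a * s\<^sup>2)
      + of_real \<mu> * a * ((1 - a * cnj a) * s) + of_real \<nu> * a^3) / of_real (1 + 3 * T)"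
    unfolding log_coeff_eq a2 a3 a4 \<mu>_def \<nu>_def by (rule log_coeff_3_identity[OF T(1)])
  moreover have "0 < 1 + 3 * T"
    using T by simp
  ultimately have "norm (log_coeff f 3) = norm ((1 - a * cnj a) * ((1 - s * cnj s) * u - cnj a * s\<^sup>2)
      + of_real \<mu> * a * ((1 - a * cnj a) * s) + of_real \<nu> * a^3) / (1 + 3 * T)"
    by (simp only: norm_divide_of_real_pos)
  also have "\<dots> \<le> 1 / (1 + 3 * T)"
    using norm_schur_cubic_le[OF asu weights] by (rule divide_right_mono) (use T in simp)
  also have "1 + 3 * T = 4 - 3 * \<beta>"
    by (simp add: T_def)
  finally show ?thesis .
qed

lemma norm_log_coeff_le:
  assumes "0 \<le> \<beta>" "\<beta> \<le> 1" "class_A_beta \<beta> f" "m \<in> {1, 2, 3}"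
  shows "norm (log_coeff f m) \<le> 1 / (real (m + 1) - real m * \<beta>)"
  using assms(4) norm_log_coeff_1_le[OF assms(2,3)] norm_log_coeff_2_le[OF assms(1-3)]
    norm_log_coeff_3_le[OF assms(1-3)]
  by auto

section \<open>Sharpness\<close>

definition extremal_caratheodory :: "nat \<Rightarrow> complex \<Rightarrow> complex" where
  "extremal_caratheodory m z = (1 + z ^ m) / (1 - z ^ m)"

lemma extremal_caratheodory_basic:
  assumes "1 \<le> m"
  shows "extremal_caratheodory m holomorphic_on ball 0 1"
    "\<forall>z\<in>ball 0 1. Re (extremal_caratheodory m z) > 0"
    "extremal_caratheodory m 0 = 1"
    "\<forall>z\<in>ball 0 1. 1 - z ^ m \<noteq> (0::complex)"
proof -
  have lt: "norm (z ^ m) < 1" if "z \<in> ball 0 1" for z :: complex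
    using that assms unfolding norm_power by (subst power_less_one_iff) auto
  then show "\<forall>z\<in>ball 0 1. 1 - z ^ m \<noteq> (0::complex)"
    by (metis less_irrefl norm_one right_minus_eq)
  then show "extremal_caratheodory m holomorphic_on ball 0 1"
    unfolding extremal_caratheodory_def[abs_def] by (intro holomorphic_intros) auto
  show "\<forall>z\<in>ball 0 1. Re (extremal_caratheodory m z) > 0"
    using lt Re_pos_inverse_cayley by (simp add: extremal_caratheodory_def)
  show "extremal_caratheodory m 0 = 1"
    using assms by (simp add: extremal_caratheodory_def power_0_left)
qed

lemma extremal_caratheodory_coeffs:
  assumes "1 \<le> m"
  defines "P \<equiv> fps_expansion (extremal_caratheodory m) 0"
  shows "\<And>k. 0 < k \<Longrightarrow> k < m \<Longrightarrow> fps_nth P k = 0" "fps_nth P m = 2"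
proof -
  note p = extremal_caratheodory_basic[OF assms(1)]
  have "P * (1 - fps_X ^ m) = 1 + fps_X ^ m"
  proof (rule fps_expansion_unique_disc)
    show "(\<lambda>z. extremal_caratheodory m z * (1 - z ^ m)) has_fps_expansion P * (1 - fps_X ^ m)"
      unfolding P_def by (intro has_fps_expansion_mult has_fps_expansion_diff has_fps_expansion_1
          has_fps_expansion_fps_X_power has_fps_expansion_fps_expansion_disc p(1))
    show "(\<lambda>z. 1 + z ^ m) has_fps_expansion 1 + fps_X ^ m"
      by (intro has_fps_expansion_add has_fps_expansion_1 has_fps_expansion_fps_X_power)
    show "\<forall>z\<in>ball 0 1. extremal_caratheodory m z * (1 - z ^ m) = 1 + z ^ m"
      using p(4) by (simp add: extremal_caratheodory_def)
  qed
  moreover have "fps_nth (P * (1 - fps_X ^ m)) k = fps_nth P k - (if k < m then 0 else fps_nth P (k - m))"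
    for k by (simp add: right_diff_distrib fps_X_power_mult_right_nth)
  ultimately have coeff: "fps_nth P k - (if k < m then 0 else fps_nth P (k - m))
      = fps_nth (1 + fps_X ^ m) k" for k
    by metis
  show "fps_nth P k = 0" if "0 < k" "k < m" for k
    using coeff[of k] that by simp
  have "fps_nth P 0 = 1"
    using p(3) by (simp add: P_def fps_expansion_def)
  then show "fps_nth P m = 2"
    using coeff[of m] assms(1) by simp
qed

definition extremal_function :: "real \<Rightarrow> nat \<Rightarrow> complex \<Rightarrow> complex" where
  "extremal_function \<beta> m = eval_fps (A_beta_series \<beta> (fps_expansion (extremal_caratheodory m) 0))"

lemma class_A_beta_extremal_function:
  assumes "\<beta> \<le> 1" "1 \<le> m"
  shows "class_A_beta \<beta> (extremal_function \<beta> m)"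
  unfolding extremal_function_def
  by (rule class_A_beta_A_beta_series[OF assms(1) extremal_caratheodory_basic(1-3)[OF assms(2)]])

lemma taylor_coeff_extremal_function:
  assumes "\<beta> \<le> 1" "1 \<le> m"
  shows "\<And>k. 0 < k \<Longrightarrow> k < m \<Longrightarrow> taylor_coeff (extremal_function \<beta> m) (Suc k) = 0"
    "taylor_coeff (extremal_function \<beta> m) (Suc m) = 2 / of_real (1 + real m * (1 - \<beta>))"
proof -
  define P where "P = fps_expansion (extremal_caratheodory m) 0"
  have "1 \<le> fps_conv_radius (A_beta_series \<beta> P)"
    unfolding P_def
    by (rule one_le_fps_conv_radius_A_beta_series[OF assms(1) extremal_caratheodory_basic(1)[OF assms(2)]])
  then have "fps_conv_radius (A_beta_series \<beta> P) > 0"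
    using less_le_trans[of 0 1 "fps_conv_radius (A_beta_series \<beta> P)"] by simp
  then have taylor: "taylor_coeff (extremal_function \<beta> m) (Suc k)
      = fps_nth P k / of_real (1 + real k * (1 - \<beta>))" for k
    by (simp only: extremal_function_def P_def[symmetric] taylor_coeff_eval_fps fps_nth_A_beta_series)
  show "taylor_coeff (extremal_function \<beta> m) (Suc k) = 0" if "0 < k" "k < m" for k
    using extremal_caratheodory_coeffs(1)[OF assms(2) that] by (simp add: taylor P_def)
  show "taylor_coeff (extremal_function \<beta> m) (Suc m) = 2 / of_real (1 + real m * (1 - \<beta>))"
    using extremal_caratheodory_coeffs(2)[OF assms(2)] by (simp only: taylor P_def)
qed

lemma log_coeff_eq_taylor_coeff:
  assumes "m \<in> {1, 2, 3}" "\<And>k. 0 < k \<Longrightarrow> k < m \<Longrightarrow> taylor_coeff f (Suc k) = 0"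
  shows "log_coeff f m = taylor_coeff f (Suc m) / 2"
proof -
  from assms(1) consider "m = 1" | "m = 2" | "m = 3"
    by blast
  then show ?thesis
  proof cases
    case 1
    show ?thesis
      unfolding 1 Suc_1 by (rule log_coeff_eq(1))
  next
    case 2
    then have "taylor_coeff f 2 = 0"
      using assms(2)[of 1, unfolded Suc_1] by simp
    then show ?thesis
      using 2 by (simp add: log_coeff_eq)
  next
    case 3
    then have "taylor_coeff f 2 = 0" "taylor_coeff f 3 = 0"
      using assms(2)[of 1, unfolded Suc_1] assms(2)[of 2] by simp_all
    then show ?thesis
      using 3 by (simp add: log_coeff_eq)
  qed
qed

lemma norm_log_coeff_extremal_function:
  assumes "\<beta> \<le> 1" "m \<in> {1, 2, 3}"
  shows "norm (log_coeff (extremal_function \<beta> m) m) = 1 / (real (m + 1) - real m * \<beta>)"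
proof -
  have "1 \<le> m"
    using assms(2) by auto
  note taylor = taylor_coeff_extremal_function[OF assms(1) this]
  have "log_coeff (extremal_function \<beta> m) m = taylor_coeff (extremal_function \<beta> m) (Suc m) / 2"
    using assms(2) taylor(1) by (rule log_coeff_eq_taylor_coeff)
  also have "\<dots> = 1 / of_real (1 + real m * (1 - \<beta>))"
    unfolding taylor(2) divide_divide_eq_left' by (rule nonzero_divide_mult_cancel_left) simp
  also have "1 + real m * (1 - \<beta>) = real (m + 1) - real m * \<beta>"
    by (simp add: algebra_simps)
  finally have "log_coeff (extremal_function \<beta> m) m = 1 / of_real (real (m + 1) - real m * \<beta>)" .
  moreover have "0 < real (m + 1) - real m * \<beta>"
  proof -
    have "0 < 1 + real m * (1 - \<beta>)"
      using assms(1) by (simp add: add_pos_nonneg)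
    also have "\<dots> = real (m + 1) - real m * \<beta>"
      by (simp add: algebra_simps)
    finally show ?thesis .
  qed
  ultimately show ?thesis
    by (simp only: norm_divide_of_real_pos norm_one)
qed

theorem theorem2p1:
  fixes \<beta> :: real
  assumes "0 \<le> \<beta>" and "\<beta> \<le> 1"
  shows "(\<forall>f. class_A_beta \<beta> f \<longrightarrow>
            (\<forall>m\<in>{1,2,3::nat}. norm (log_coeff f m) \<le> 1 / (real (m + 1) - real m * \<beta>)))
       \<and> (\<forall>m\<in>{1,2,3::nat}. \<exists>f. class_A_beta \<beta> f \<and>
            norm (log_coeff f m) = 1 / (real (m + 1) - real m * \<beta>))"
proof (intro conjI allI impI ballI)
  fix f and m :: nat
  assume "class_A_beta \<beta> f" "m \<in> {1, 2, 3}"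
  then show "norm (log_coeff f m) \<le> 1 / (real (m + 1) - real m * \<beta>)"
    by (rule norm_log_coeff_le[OF assms])
next
  fix m :: nat
  assume m: "m \<in> {1, 2, 3}"
  then have "1 \<le> m"
    by auto
  then show "\<exists>f. class_A_beta \<beta> f \<and> norm (log_coeff f m) = 1 / (real (m + 1) - real m * \<beta>)"
    using class_A_beta_extremal_function[OF assms(2)] norm_log_coeff_extremal_function[OF assms(2) m]
    by blast
qed

end
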